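(* Let $i\ge1$ and $j\ge0$. There is a graded isomorphism of $E(i)_*$-comodules \[ M_i(j)\cong\Sigma^{qj}N_{i-1}(\lfloor j/p\rfloor). \]
   Context: Let $p$ be an odd prime and $q=2(p-1)$. In the mod $p$ dual Steenrod algebra let $\zeta_n$ (degree $2(p^n-1)$) and $\overline{\tau}_n$ (degree $2p^n-1$) be the conjugates of Milnor's $\xi_n,\tau_n$. For $n\ge0$ let $(A/\!/E(n))_*=\mathbb{F}_p[\zeta_1,\zeta_2,\ldots]\otimes E(\overline{\tau}_{n+1},\overline{\tau}_{n+2},\ldots)$, a comodule over $E(n)_*=E(\overline{\tau}_0,\ldots,\overline{\tau}_n)$ (primitive generators) via the coproduct of the dual Steenrod algebra, and hence also over $E(i)_*$ for any $i$. Weight: $\mathrm{wt}(\zeta_k)=\mathrm{wt}(\overline{\tau}_k)=p^k$, additive on products of monomials. $M_i(j)$ is the span of the monomials of $(A/\!/E(i))_*$ of weight exactly $pj$, and $N_{i-1}(m)$ is the span of the monomials of $(A/\!/E(i-1))_*$ of weight $\le pm$ (both are $E(i)_*$-subcomodules). *)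

theory Defs
  imports "HOL-Library.Poly_Mapping" "Berlekamp_Zassenhaus.Finite_Field"
begin

text \<open>A monomial of A_* = F_p[zeta_1,zeta_2,...] (x) E(taubar_0,taubar_1,...) is a pair (e,T):
  e k is the exponent of zeta_k (k >= 1; the entry at 0 is required to be 0),
  T is the finite set of indices k of the exterior factors taubar_k, the
  exterior part being the product of the taubar_k, k in T, in increasing order of k.\<close>

type_synonym amono = "(nat \<Rightarrow>\<^sub>0 nat) \<times> nat set"

type_synonym 'f avec = "amono \<Rightarrow>\<^sub>0 'f"

text \<open>Monomials of (A//E(n))_* = F_p[zeta_1,...] (x) E(taubar_(n+1), taubar_(n+2), ...).\<close>

definition valid_mono :: "nat \<Rightarrow> amono \<Rightarrow> bool" where
  "valid_mono n m \<longleftrightarrow> Poly_Mapping.lookup (fst m) 0 = 0 \<and> finite (snd m) \<and> (\<forall>k\<in>snd m. n + 1 \<le> k)"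

definition wt :: "nat \<Rightarrow> amono \<Rightarrow> nat" where
  "wt p m = (\<Sum>k\<in>Poly_Mapping.keys (fst m). Poly_Mapping.lookup (fst m) k * p ^ k) + (\<Sum>k\<in>snd m. p ^ k)"

definition deg :: "nat \<Rightarrow> amono \<Rightarrow> nat" where
  "deg p m = (\<Sum>k\<in>Poly_Mapping.keys (fst m). Poly_Mapping.lookup (fst m) k * (2 * (p ^ k - 1))) + (\<Sum>k\<in>snd m. 2 * p ^ k - 1)"

definition M_space :: "nat \<Rightarrow> nat \<Rightarrow> nat \<Rightarrow> ('f::zero) avec set" where
  "M_space p i j = {v. \<forall>m\<in>Poly_Mapping.keys v. valid_mono i m \<and> wt p m = p * j}"

definition N_space :: "nat \<Rightarrow> nat \<Rightarrow> nat \<Rightarrow> ('f::zero) avec set" where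
  "N_space p n m = {v. \<forall>mo\<in>Poly_Mapping.keys v. valid_mono n mo \<and> wt p mo \<le> p * m}"

text \<open>A basis element (S,e,T) stands for taubar'_S (x) zeta^e taubar_T, where taubar'_S is the
  increasing-order product of the generators taubar'_s (s in S) of the LEFT tensor factor
  E(i)_*.  In the graded-commutative algebra E(i)_* (x) A_* (Koszul signs) this is the
  product taubar'_S * zeta^e * taubar_T.\<close>

type_synonym bmono = "nat set \<times> (nat \<Rightarrow>\<^sub>0 nat) \<times> nat set"
type_synonym 'f bvec = "bmono \<Rightarrow>\<^sub>0 'f"

definition ninv :: "nat set \<Rightarrow> nat set \<Rightarrow> nat" where
  "ninv A B = card {(a, b). a \<in> A \<and> b \<in> B \<and> b < a}"

text \<open>Sign of (taubar'_S1 zeta^e1 taubar_T1)(taubar'_S2 zeta^e2 taubar_T2), expressed in the basis;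
  zero if an exterior generator is repeated.\<close>

definition bsign :: "bmono \<Rightarrow> bmono \<Rightarrow> 'f::comm_ring_1" where
  "bsign a b = (case a of (S1, e1, T1) \<Rightarrow> case b of (S2, e2, T2) \<Rightarrow>
     if S1 \<inter> S2 = {} \<and> T1 \<inter> T2 = {}
     then (- 1) ^ (card T1 * card S2 + ninv S1 S2 + ninv T1 T2) else 0)"

definition bmerge :: "bmono \<Rightarrow> bmono \<Rightarrow> bmono" where
  "bmerge a b = (case a of (S1, e1, T1) \<Rightarrow> case b of (S2, e2, T2) \<Rightarrow> (S1 \<union> S2, e1 + e2, T1 \<union> T2))"

definition bmul :: "'f::comm_ring_1 bvec \<Rightarrow> 'f bvec \<Rightarrow> 'f bvec" where
  "bmul x y = (\<Sum>a\<in>Poly_Mapping.keys x. \<Sum>b\<in>Poly_Mapping.keys y.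
      Poly_Mapping.single (bmerge a b) (Poly_Mapping.lookup x a * Poly_Mapping.lookup y b * bsign a b))"

definition bone :: "'f::comm_ring_1 bvec" where
  "bone = Poly_Mapping.single ({}, 0, {}) 1"

text \<open>The coproduct of the dual Steenrod algebra in conjugate generators is
  psi(zeta_n) = sum_k zeta_k (x) zeta_(n-k)^(p^k),
  psi(taubar_n) = 1 (x) taubar_n + sum_k taubar_k (x) zeta_(n-k)^(p^k)   (zeta_0 = 1).
  Projecting the left factor onto E(i)_* = E(taubar_0,...,taubar_i) gives the left
  E(i)_*-coaction: zeta_n |-> 1 (x) zeta_n and
  taubar_n |-> 1 (x) taubar_n + sum_(k <= min i n) taubar_k (x) zeta_(n-k)^(p^k).\<close>

definition psi_tau :: "nat \<Rightarrow> nat \<Rightarrow> nat \<Rightarrow> 'f::comm_ring_1 bvec" where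
  "psi_tau p i n = Poly_Mapping.single ({}, 0, {n}) 1 +
     (\<Sum>k\<in>{..min i n}. Poly_Mapping.single
        ({k}, (if k < n then Poly_Mapping.single (n - k) (p ^ k) else 0), {}) 1)"

text \<open>The coaction is multiplicative: on the monomial zeta^e taubar_(k1) ... taubar_(kr)
  (k1 < ... < kr) it is (1 (x) zeta^e) psi(taubar_(k1)) ... psi(taubar_(kr)).\<close>

definition psi_mono :: "nat \<Rightarrow> nat \<Rightarrow> amono \<Rightarrow> 'f::comm_ring_1 bvec" where
  "psi_mono p i m = bmul (Poly_Mapping.single ({}, fst m, {}) 1)
      (foldr (\<lambda>n acc. bmul (psi_tau p i n) acc) (sorted_list_of_set (snd m)) bone)"

definition psi :: "nat \<Rightarrow> nat \<Rightarrow> 'f::comm_ring_1 avec \<Rightarrow> 'f bvec" where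
  "psi p i x = (\<Sum>m\<in>Poly_Mapping.keys x. bmul (Poly_Mapping.single ({}, 0, {}) (Poly_Mapping.lookup x m)) (psi_mono p i m))"

text \<open>Component of an element of E(i)_* (x) A_* at the basis element taubar'_S of E(i)_*:
  X = sum_S taubar'_S (x) comp S X.\<close>

definition comp :: "nat set \<Rightarrow> 'f::zero bvec \<Rightarrow> 'f avec" where
  "comp S X = Abs_poly_mapping (\<lambda>(e, T). Poly_Mapping.lookup X (S, e, T))"

text \<open>A map f : V -> W between subcomodules V, W of A_* (with the coaction psi p i) is a
  comodule map iff (1 (x) f) o psi = psi o f, i.e. f commutes with each component.\<close>

definition homog :: "nat \<Rightarrow> nat \<Rightarrow> 'f::zero avec \<Rightarrow> bool" where
  "homog p d v \<longleftrightarrow> (\<forall>m\<in>Poly_Mapping.keys v. deg p m = d)"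

definition comod_iso_shift ::
  "nat \<Rightarrow> nat \<Rightarrow> nat \<Rightarrow> 'f::comm_ring_1 avec set \<Rightarrow> 'f avec set \<Rightarrow> ('f avec \<Rightarrow> 'f avec) \<Rightarrow> bool" where
  "comod_iso_shift p i s V W f \<longleftrightarrow>
     bij_betw f V W \<and>
     (\<forall>x\<in>V. \<forall>y\<in>V. f (x + y) = f x + f y) \<and>
     (\<forall>c. \<forall>x\<in>V. f (Poly_Mapping.map ((*) c) x) = Poly_Mapping.map ((*) c) (f x)) \<and>
     (\<forall>x\<in>V. \<forall>d. homog p d x \<longrightarrow> (\<forall>m\<in>Poly_Mapping.keys (f x). deg p m + s = d)) \<and>
     (\<forall>x\<in>V. \<forall>S \<subseteq> {..i}. f (comp S (psi p i x)) = comp S (psi p i (f x)))"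

end

theory Submission
  imports Defs
begin

(* The isomorphism is induced by the map on monomials that deletes zeta_1 and lowers every index
   by one: zeta_k |-> zeta_(k-1), taubar_k |-> taubar_(k-1).  It divides the weight by p after
   removing the contribution p a of zeta_1^a, so a monomial of M_i(j) goes to a monomial of weight
   j - a of (A//E(i-1))_*; that weight is a multiple of p, hence at most p floor(j/p).  Conversely
   a is recovered as j minus the weight, which gives the inverse.  The degree drops by q j.  The
   map commutes with the coaction because for n > i the coaction of taubar_n is
   1 (x) taubar_n + sum_(k <= i) taubar_k (x) zeta_(n-k)^(p^k), and lowering turns it into the
   coaction of taubar_(n-1); the Koszul signs survive since lowering preserves the order of the
   exterior indices, none of which is 0 on the A_* side. *)

section \<open>Pushing finitely supported functions forward along a map of keys\<close>

definition push_keys :: "('a \<Rightarrow> 'b) \<Rightarrow> ('a \<Rightarrow>\<^sub>0 'c::comm_monoid_add) \<Rightarrow> 'b \<Rightarrow>\<^sub>0 'c" where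
  "push_keys g v = (\<Sum>m\<in>Poly_Mapping.keys v. Poly_Mapping.single (g m) (Poly_Mapping.lookup v m))"

lemma push_keys_eq_sum:
  assumes "finite A" "Poly_Mapping.keys v \<subseteq> A"
  shows "push_keys g v = (\<Sum>m\<in>A. Poly_Mapping.single (g m) (Poly_Mapping.lookup v m))"
  unfolding push_keys_def using assms by (intro sum.mono_neutral_left) (auto simp: in_keys_iff)

lemma lookup_push_keys:
  assumes "finite A" "Poly_Mapping.keys v \<subseteq> A"
  shows "Poly_Mapping.lookup (push_keys g v) k = (\<Sum>m\<in>A. if g m = k then Poly_Mapping.lookup v m else 0)"
  by (simp add: push_keys_eq_sum[OF assms] lookup_sum lookup_single when_def)

lemma push_keys_zero [simp]: "push_keys g 0 = 0"
  by (simp add: push_keys_def)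

lemma push_keys_single [simp]: "push_keys g (Poly_Mapping.single a c) = Poly_Mapping.single (g a) c"
  by (simp add: push_keys_def)

lemma push_keys_add: "push_keys g (v + w) = push_keys g v + push_keys g w"
proof -
  let ?A = "Poly_Mapping.keys v \<union> Poly_Mapping.keys w"
  have "push_keys g (v + w) = (\<Sum>m\<in>?A. Poly_Mapping.single (g m) (Poly_Mapping.lookup (v + w) m))"
    by (rule push_keys_eq_sum) (simp_all add: keys_add)
  also have "\<dots> = push_keys g v + push_keys g w"
    by (simp add: push_keys_eq_sum[of ?A] lookup_add single_add sum.distrib)
  finally show ?thesis .
qed

lemma push_keys_sum: "push_keys g (sum F I) = (\<Sum>i\<in>I. push_keys g (F i))"
  by (induction I rule: infinite_finite_induct) (auto simp: push_keys_add)

lemma lookup_map_mult [simp]: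
  "Poly_Mapping.lookup (Poly_Mapping.map ((*) (c::'c::mult_zero)) v) k = c * Poly_Mapping.lookup v k"
  by (simp add: map.rep_eq when_def)

lemma map_mult_zero [simp]: "Poly_Mapping.map ((*) (0::'c::mult_zero)) v = 0"
  by (rule poly_mapping_eqI) simp

lemma map_mult_add:
  "Poly_Mapping.map ((*) ((a::'c::semiring_0) + b)) v = Poly_Mapping.map ((*) a) v + Poly_Mapping.map ((*) b) v"
  by (rule poly_mapping_eqI) (simp add: lookup_add distrib_right)

lemma push_keys_smult:
  "push_keys g (Poly_Mapping.map ((*) (c::'c::comm_semiring_1)) v) = Poly_Mapping.map ((*) c) (push_keys g v)"
proof (rule poly_mapping_eqI)
  fix k
  have "Poly_Mapping.keys (Poly_Mapping.map ((*) c) v) \<subseteq> Poly_Mapping.keys v"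
    by (auto simp: in_keys_iff)
  then show "Poly_Mapping.lookup (push_keys g (Poly_Mapping.map ((*) c) v)) k =
      Poly_Mapping.lookup (Poly_Mapping.map ((*) c) (push_keys g v)) k"
    by (subst lookup_push_keys[OF finite_keys])
       (simp_all add: lookup_push_keys[OF finite_keys order.refl] sum_distrib_left if_distrib cong: if_cong)
qed

lemma push_keys_comp: "push_keys g (push_keys h v) = push_keys (g \<circ> h) v"
  unfolding push_keys_def[of h] push_keys_sum push_keys_single by (simp add: push_keys_def)

lemma push_keys_id_on:
  assumes "\<And>m. m \<in> Poly_Mapping.keys v \<Longrightarrow> g m = m"
  shows "push_keys g v = v"
proof (rule poly_mapping_eqI)
  fix k
  have "Poly_Mapping.lookup (push_keys g v) k =
      (\<Sum>m\<in>Poly_Mapping.keys v. if m = k then Poly_Mapping.lookup v m else 0)"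
    using assms by (simp add: lookup_push_keys[OF finite_keys order.refl] cong: if_cong)
  then show "Poly_Mapping.lookup (push_keys g v) k = Poly_Mapping.lookup v k"
    by (simp add: in_keys_iff)
qed

lemma keys_push_keys: "Poly_Mapping.keys (push_keys g v) \<subseteq> g ` Poly_Mapping.keys v"
  unfolding push_keys_def by (rule order.trans[OF keys_sum]) auto

lemma bij_betw_push_keys:
  assumes "bij_betw g A B"
  shows "bij_betw (push_keys g) {v. Poly_Mapping.keys v \<subseteq> A} {v. Poly_Mapping.keys v \<subseteq> B}"
proof (rule bij_betw_byWitness[where f' = "push_keys (inv_into A g)"])
  have gA: "g ` A \<subseteq> B" and hB: "inv_into A g ` B \<subseteq> A"
    using assms by (auto simp: bij_betw_def inv_into_into)
  show "\<forall>v\<in>{v. Poly_Mapping.keys v \<subseteq> A}. push_keys (inv_into A g) (push_keys g v) = v"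
    using assms by (auto simp: push_keys_comp bij_betw_def intro!: push_keys_id_on)
  show "\<forall>v\<in>{v. Poly_Mapping.keys v \<subseteq> B}. push_keys g (push_keys (inv_into A g) v) = v"
    using assms by (auto simp: push_keys_comp bij_betw_def f_inv_into_f intro!: push_keys_id_on)
  show "push_keys g ` {v. Poly_Mapping.keys v \<subseteq> A} \<subseteq> {v. Poly_Mapping.keys v \<subseteq> B}"
    using keys_push_keys gA by fastforce
  show "push_keys (inv_into A g) ` {v. Poly_Mapping.keys v \<subseteq> B} \<subseteq> {v. Poly_Mapping.keys v \<subseteq> A}"
    using keys_push_keys hB by fastforce
qed

section \<open>The product of E(i)_* (x) A_*\<close>

lemma bmul_eq_sum:
  assumes "finite A" "Poly_Mapping.keys X \<subseteq> A" "finite B" "Poly_Mapping.keys Y \<subseteq> B"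
  shows "bmul X Y = (\<Sum>a\<in>A. \<Sum>b\<in>B. Poly_Mapping.single (bmerge a b)
            (Poly_Mapping.lookup X a * Poly_Mapping.lookup Y b * bsign a b))"
proof -
  have "bmul X Y = (\<Sum>a\<in>Poly_Mapping.keys X. \<Sum>b\<in>B. Poly_Mapping.single (bmerge a b)
            (Poly_Mapping.lookup X a * Poly_Mapping.lookup Y b * bsign a b))"
    unfolding bmul_def using assms by (intro sum.cong refl sum.mono_neutral_left) (auto simp: in_keys_iff)
  also have "\<dots> = (\<Sum>a\<in>A. \<Sum>b\<in>B. Poly_Mapping.single (bmerge a b)
            (Poly_Mapping.lookup X a * Poly_Mapping.lookup Y b * bsign a b))"
    using assms by (intro sum.mono_neutral_left) (auto simp: in_keys_iff)
  finally show ?thesis .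
qed

lemma bmul_add_left: "bmul (X + X') Y = bmul X Y + bmul X' Y"
proof -
  let ?A = "Poly_Mapping.keys X \<union> Poly_Mapping.keys X'" and ?B = "Poly_Mapping.keys Y"
  show ?thesis
    by (simp add: bmul_eq_sum[of ?A _ ?B] keys_add lookup_add distrib_right single_add sum.distrib)
qed

lemma bmul_add_right: "bmul X (Y + Y') = bmul X Y + bmul X Y'"
proof -
  let ?A = "Poly_Mapping.keys X" and ?B = "Poly_Mapping.keys Y \<union> Poly_Mapping.keys Y'"
  show ?thesis
    by (simp add: bmul_eq_sum[of ?A _ ?B] keys_add lookup_add distrib_left distrib_right single_add sum.distrib)
qed

lemma bmul_zero_left [simp]: "bmul 0 Y = 0"
  and bmul_zero_right [simp]: "bmul X 0 = 0"
  by (simp_all add: bmul_def)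

lemma bmul_sum_left: "bmul (sum F I) Y = (\<Sum>i\<in>I. bmul (F i) Y)"
  by (induction I rule: infinite_finite_induct) (simp_all add: bmul_add_left)

lemma bmul_sum_right: "bmul X (sum F I) = (\<Sum>i\<in>I. bmul X (F i))"
  by (induction I rule: infinite_finite_induct) (simp_all add: bmul_add_right)

lemma bmul_single:
  "bmul (Poly_Mapping.single a c) (Poly_Mapping.single b d) = Poly_Mapping.single (bmerge a b) (c * d * bsign a b)"
  by (simp add: bmul_eq_sum[of "{a}" _ "{b}"])

lemma bmul_unit_left:
  "bmul (Poly_Mapping.single ({}, 0, {}) c) Y = Poly_Mapping.map ((*) c) (Y :: 'f::comm_ring_1 bvec)"
proof (rule poly_mapping_eqI)
  fix k
  have merge: "bmerge ({}, 0, {}) b = b" and sign: "bsign ({}, 0, {}) b = (1::'f)" for b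
    by (cases b; simp add: bmerge_def bsign_def ninv_def)+
  show "Poly_Mapping.lookup (bmul (Poly_Mapping.single ({}, 0, {}) c) Y) k =
      Poly_Mapping.lookup (Poly_Mapping.map ((*) c) Y) k"
    by (simp add: bmul_eq_sum[of "{({}, 0, {})}" _ "Poly_Mapping.keys Y"] merge sign
        lookup_sum lookup_single when_def in_keys_iff)
qed

lemma keys_bmul:
  "Poly_Mapping.keys (bmul X Y) \<subseteq> (\<Union>a\<in>Poly_Mapping.keys X. \<Union>b\<in>Poly_Mapping.keys Y. {bmerge a b})"
  unfolding bmul_def by (rule order.trans[OF keys_sum]) (fastforce dest!: subsetD[OF keys_sum] split: if_splits)

lemma push_keys_bmul:
  fixes X Y :: "'f::comm_ring_1 bvec"
  assumes "\<And>a b. a \<in> Poly_Mapping.keys X \<Longrightarrow> b \<in> Poly_Mapping.keys Y \<Longrightarrow> h (bmerge a b) = bmerge (h a) (h b)"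
    and "\<And>a b. a \<in> Poly_Mapping.keys X \<Longrightarrow> b \<in> Poly_Mapping.keys Y \<Longrightarrow> bsign (h a) (h b) = (bsign a b :: 'f)"
  shows "push_keys h (bmul X Y) = bmul (push_keys h X) (push_keys h Y)"
proof -
  have "push_keys h (bmul X Y) = (\<Sum>a\<in>Poly_Mapping.keys X. \<Sum>b\<in>Poly_Mapping.keys Y.
      Poly_Mapping.single (bmerge (h a) (h b)) (Poly_Mapping.lookup X a * Poly_Mapping.lookup Y b * bsign (h a) (h b)))"
    unfolding bmul_def push_keys_sum push_keys_single by (intro sum.cong refl) (simp add: assms)
  also have "\<dots> = bmul (push_keys h X) (push_keys h Y)"
    unfolding push_keys_def[of h X] push_keys_def[of h Y] bmul_sum_left bmul_sum_right bmul_single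
    by (rule sum.swap)
  finally show ?thesis .
qed

section \<open>Koszul signs under order-preserving reindexing\<close>

lemma strict_mono_on_pred: "0 \<notin> T \<Longrightarrow> strict_mono_on T (\<lambda>k::nat. k - 1)"
  by (rule strict_mono_onI) (metis diff_less_mono less_one not_le)

lemma sorted_list_of_set_image_strict_mono:
  assumes "finite T" "strict_mono_on T f"
  shows "sorted_list_of_set (f ` T) = map f (sorted_list_of_set T)"
proof (rule sorted_list_of_set_unique[THEN iffD1])
  let ?L = "sorted_list_of_set T"
  have "sorted_wrt (\<lambda>x y. f x < f y) ?L"
    using assms by (intro sorted_wrt_mono_rel[OF _ strict_sorted_list_of_set]) (auto dest: strict_mono_onD)
  then show "sorted_wrt (<) (map f ?L) \<and> set (map f ?L) = f ` T \<and> length (map f ?L) = card (f ` T)"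
    using assms by (simp add: sorted_wrt_map card_image strict_mono_on_imp_inj_on)
qed (use assms in simp)

lemma ninv_image_strict_mono:
  assumes "strict_mono_on (T1 \<union> T2) f"
  shows "ninv (f ` T1) (f ` T2) = ninv T1 T2"
proof -
  let ?inv = "\<lambda>T1 T2. {(a, b). a \<in> T1 \<and> b \<in> T2 \<and> b < a}"
  have inj: "inj_on f (T1 \<union> T2)" by (rule strict_mono_on_imp_inj_on[OF assms])
  have "?inv (f ` T1) (f ` T2) = map_prod f f ` ?inv T1 T2"
    using assms by (auto simp: strict_mono_on_less)
  moreover have "inj_on (map_prod f f) (?inv T1 T2)"
    using inj by (auto simp: inj_on_def)
  ultimately show ?thesis
    unfolding ninv_def by (simp add: card_image)
qed

lemma bsign_image_strict_mono:
  assumes "strict_mono_on (T1 \<union> T2) f"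
  shows "bsign (S1, e1', f ` T1) (S2, e2', f ` T2) = bsign (S1, e1, T1) (S2, e2, T2)"
proof -
  have inj: "inj_on f (T1 \<union> T2)" by (rule strict_mono_on_imp_inj_on[OF assms])
  have "card (f ` T1) = card T1"
    using inj by (auto intro: card_image inj_on_subset)
  moreover have "f ` T1 \<inter> f ` T2 = {} \<longleftrightarrow> T1 \<inter> T2 = {}"
    using inj_on_image_Int[OF inj, of T1 T2] by auto
  ultimately show ?thesis
    by (simp add: bsign_def ninv_image_strict_mono[OF assms])
qed

section \<open>Lowering and raising monomials\<close>

definition lower_exps :: "(nat \<Rightarrow>\<^sub>0 nat) \<Rightarrow> nat \<Rightarrow>\<^sub>0 nat" where
  "lower_exps e = Abs_poly_mapping (\<lambda>k. if k = 0 then 0 else Poly_Mapping.lookup e (Suc k))"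

definition raise_exps :: "nat \<Rightarrow> (nat \<Rightarrow>\<^sub>0 nat) \<Rightarrow> nat \<Rightarrow>\<^sub>0 nat" where
  "raise_exps a e = Abs_poly_mapping (\<lambda>k. if k = 0 then 0 else if k = 1 then a else Poly_Mapping.lookup e (k - 1))"

lemma lookup_lower_exps:
  "Poly_Mapping.lookup (lower_exps e) k = (if k = 0 then 0 else Poly_Mapping.lookup e (Suc k))"
proof -
  have "finite {k. (if k = 0 then 0 else Poly_Mapping.lookup e (Suc k)) \<noteq> 0}"
    by (rule finite_subset[OF _ finite_vimageI[OF finite_keys[of e] inj_Suc]]) (auto simp: in_keys_iff)
  then show ?thesis
    unfolding lower_exps_def by simp
qed

lemma lookup_raise_exps:
  "Poly_Mapping.lookup (raise_exps a e) k =
     (if k = 0 then 0 else if k = 1 then a else Poly_Mapping.lookup e (k - 1))"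
proof -
  let ?f = "\<lambda>k. if k = 0 then 0 else if k = 1 then a else Poly_Mapping.lookup e (k - 1)"
  have "{k. ?f k \<noteq> 0} \<subseteq> insert 1 (Suc ` Poly_Mapping.keys e)"
  proof
    fix k assume "k \<in> {k. ?f k \<noteq> 0}"
    then show "k \<in> insert 1 (Suc ` Poly_Mapping.keys e)"
      by (cases k) (auto simp: in_keys_iff)
  qed
  then have "finite {k. ?f k \<noteq> 0}"
    by (rule finite_subset) simp
  then show ?thesis
    unfolding raise_exps_def by simp
qed

lemma lower_exps_add: "lower_exps (a + b) = lower_exps a + lower_exps b"
  by (rule poly_mapping_eqI) (simp add: lookup_lower_exps lookup_add)

lemma lower_exps_zero [simp]: "lower_exps 0 = 0"
  by (rule poly_mapping_eqI) (simp add: lookup_lower_exps)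

lemma lower_raise_exps: "Poly_Mapping.lookup e 0 = 0 \<Longrightarrow> lower_exps (raise_exps a e) = e"
  by (rule poly_mapping_eqI) (simp add: lookup_lower_exps lookup_raise_exps)

lemma raise_lower_exps:
  "Poly_Mapping.lookup e 0 = 0 \<Longrightarrow> raise_exps (Poly_Mapping.lookup e 1) (lower_exps e) = e"
  by (rule poly_mapping_eqI) (auto simp: lookup_lower_exps lookup_raise_exps)

definition lower_mono :: "amono \<Rightarrow> amono" where
  "lower_mono m = (lower_exps (fst m), (\<lambda>k. k - 1) ` snd m)"

definition raise_mono :: "nat \<Rightarrow> nat \<Rightarrow> amono \<Rightarrow> amono" where
  "raise_mono p j m = (raise_exps (j - wt p m) (fst m), Suc ` snd m)"

lemma bmerge_lower_mono:
  "apsnd lower_mono (bmerge a b) = bmerge (apsnd lower_mono a) (apsnd lower_mono b)"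
  by (cases a; cases b) (simp add: bmerge_def lower_mono_def lower_exps_add image_Un)

lemma bsign_lower_mono:
  assumes "0 \<notin> snd (snd a)" "0 \<notin> snd (snd b)"
  shows "bsign (apsnd lower_mono a) (apsnd lower_mono b) = bsign a b"
  using assms
  by (cases a; cases b)
     (simp add: lower_mono_def del: One_nat_def, intro bsign_image_strict_mono strict_mono_on_pred, simp)

lemma push_keys_lower_bmul:
  fixes X Y :: "'f::comm_ring_1 bvec"
  assumes "\<forall>b\<in>Poly_Mapping.keys X. 0 \<notin> snd (snd b)" "\<forall>b\<in>Poly_Mapping.keys Y. 0 \<notin> snd (snd b)"
  shows "push_keys (apsnd lower_mono) (bmul X Y) =
    bmul (push_keys (apsnd lower_mono) X) (push_keys (apsnd lower_mono) Y)"
  using assms by (intro push_keys_bmul bmerge_lower_mono bsign_lower_mono) auto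

lemma bmul_no_tau0:
  assumes "\<forall>b\<in>Poly_Mapping.keys X. 0 \<notin> snd (snd b)" "\<forall>b\<in>Poly_Mapping.keys Y. 0 \<notin> snd (snd b)"
  shows "\<forall>b\<in>Poly_Mapping.keys (bmul X Y). 0 \<notin> snd (snd b)"
  using assms keys_bmul[of X Y] by (fastforce simp: bmerge_def split: prod.splits)

section \<open>Lowering commutes with the coaction\<close>

definition psi_taus :: "nat \<Rightarrow> nat \<Rightarrow> nat list \<Rightarrow> 'f::comm_ring_1 bvec" where
  "psi_taus p i L = foldr (\<lambda>n acc. bmul (psi_tau p i n) acc) L bone"

lemma psi_mono_eq_psi_taus:
  "psi_mono p i m = bmul (Poly_Mapping.single ({}, fst m, {}) 1) (psi_taus p i (sorted_list_of_set (snd m)))"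
  by (simp add: psi_mono_def psi_taus_def)

lemma psi_tau_no_tau0:
  assumes "0 < n"
  shows "\<forall>b\<in>Poly_Mapping.keys (psi_tau p i n :: 'f::comm_ring_1 bvec). 0 \<notin> snd (snd b)"
proof -
  have "Poly_Mapping.keys (psi_tau p i n :: 'f bvec) \<subseteq> insert ({}, 0, {n}) (\<Union>k. {({k}, e, {}) | e. True})"
    unfolding psi_tau_def by (rule order.trans[OF keys_add]) (auto dest!: subsetD[OF keys_sum])
  with assms show ?thesis by auto
qed

lemma push_keys_lower_psi_tau:
  assumes "i < n"
  shows "push_keys (apsnd lower_mono) (psi_tau p i n :: 'f::comm_ring_1 bvec) = psi_tau p i (n - 1)"
proof -
  have "lower_exps (if k < n then Poly_Mapping.single (n - k) (p ^ k) else 0) =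
      (if k < n - 1 then Poly_Mapping.single (n - 1 - k) (p ^ k) else 0)" if "k \<le> i" for k
    using that assms by (intro poly_mapping_eqI) (auto simp: lookup_lower_exps lookup_single when_def)
  moreover have "min i n = i" "min i (n - 1) = i" using assms by auto
  ultimately show ?thesis
    unfolding psi_tau_def push_keys_add push_keys_sum push_keys_single
    by (simp add: lower_mono_def del: One_nat_def)
qed

lemma psi_taus_no_tau0:
  "0 \<notin> set L \<Longrightarrow> \<forall>b\<in>Poly_Mapping.keys (psi_taus p i L :: 'f::comm_ring_1 bvec). 0 \<notin> snd (snd b)"
proof (induction L)
  case Nil
  then show ?case by (simp add: psi_taus_def bone_def)
next
  case (Cons n L)
  then show ?case
    unfolding psi_taus_def foldr.simps o_def
    by (intro bmul_no_tau0 psi_tau_no_tau0) (auto simp: psi_taus_def)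
qed

lemma push_keys_lower_psi_taus:
  "\<forall>n\<in>set L. i < n \<Longrightarrow>
    push_keys (apsnd lower_mono) (psi_taus p i L :: 'f::comm_ring_1 bvec) = psi_taus p i (map (\<lambda>n. n - 1) L)"
proof (induction L)
  case Nil
  then show ?case by (simp add: psi_taus_def bone_def lower_mono_def)
next
  case (Cons n L)
  have "\<forall>b\<in>Poly_Mapping.keys (psi_tau p i n :: 'f bvec). 0 \<notin> snd (snd b)"
    using Cons.prems by (intro psi_tau_no_tau0) auto
  moreover have "\<forall>b\<in>Poly_Mapping.keys (psi_taus p i L :: 'f bvec). 0 \<notin> snd (snd b)"
    using Cons.prems by (intro psi_taus_no_tau0) auto
  ultimately have "push_keys (apsnd lower_mono) (bmul (psi_tau p i n) (psi_taus p i L) :: 'f bvec) =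
      bmul (push_keys (apsnd lower_mono) (psi_tau p i n)) (push_keys (apsnd lower_mono) (psi_taus p i L))"
    by (rule push_keys_lower_bmul)
  also have "\<dots> = bmul (psi_tau p i (n - 1)) (psi_taus p i (map (\<lambda>n. n - 1) L))"
    using Cons by (simp add: push_keys_lower_psi_tau)
  finally show ?case by (simp add: psi_taus_def)
qed

lemma psi_mono_lower_mono:
  assumes "finite (snd m)" "\<forall>t\<in>snd m. i < t"
  shows "psi_mono p i (lower_mono m) = (push_keys (apsnd lower_mono) (psi_mono p i m) :: 'f::comm_ring_1 bvec)"
proof -
  let ?L = "sorted_list_of_set (snd m)"
  have "strict_mono_on (snd m) (\<lambda>k. k - 1)"
    using assms by (intro strict_mono_on_pred) auto
  then have "sorted_list_of_set (snd (lower_mono m)) = map (\<lambda>n. n - 1) ?L"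
    unfolding lower_mono_def using assms by (simp add: sorted_list_of_set_image_strict_mono)
  moreover have "0 \<notin> set ?L" "\<forall>n\<in>set ?L. i < n"
    using assms by auto
  ultimately show ?thesis
    unfolding psi_mono_eq_psi_taus
    by (simp add: push_keys_lower_bmul psi_taus_no_tau0 push_keys_lower_psi_taus lower_mono_def)
qed

lemma psi_eq_sum:
  assumes "finite A" "Poly_Mapping.keys x \<subseteq> A"
  shows "psi p i (x :: 'f::comm_ring_1 avec) =
    (\<Sum>m\<in>A. Poly_Mapping.map ((*) (Poly_Mapping.lookup x m)) (psi_mono p i m))"
  unfolding psi_def bmul_unit_left using assms
  by (intro sum.mono_neutral_left) (auto simp: in_keys_iff)

lemma psi_add: "psi p i (x + y :: 'f::comm_ring_1 avec) = psi p i x + psi p i y"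
proof -
  let ?A = "Poly_Mapping.keys x \<union> Poly_Mapping.keys y"
  show ?thesis
    by (simp add: psi_eq_sum[of ?A] keys_add lookup_add map_mult_add sum.distrib)
qed

lemma psi_zero [simp]: "psi p i (0 :: 'f::comm_ring_1 avec) = 0"
  by (simp add: psi_def)

lemma psi_sum: "psi p i (sum F I :: 'f::comm_ring_1 avec) = (\<Sum>k\<in>I. psi p i (F k))"
  by (induction I rule: infinite_finite_induct) (simp_all add: psi_add)

lemma psi_single:
  "psi p i (Poly_Mapping.single m c :: 'f::comm_ring_1 avec) = Poly_Mapping.map ((*) c) (psi_mono p i m)"
  by (simp add: psi_eq_sum[of "{m}"])

lemma psi_push_keys_lower_mono:
  assumes "\<forall>m\<in>Poly_Mapping.keys x. finite (snd m) \<and> (\<forall>t\<in>snd m. i < t)"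
  shows "psi p i (push_keys lower_mono x) = push_keys (apsnd lower_mono) (psi p i (x :: 'f::comm_ring_1 avec))"
proof -
  have "psi p i (push_keys lower_mono x) = (\<Sum>m\<in>Poly_Mapping.keys x.
      Poly_Mapping.map ((*) (Poly_Mapping.lookup x m)) (psi_mono p i (lower_mono m)))"
    unfolding push_keys_def psi_sum psi_single ..
  also have "\<dots> = push_keys (apsnd lower_mono) (psi p i x)"
    using assms
    by (simp add: psi_eq_sum[OF finite_keys order.refl] push_keys_sum psi_mono_lower_mono push_keys_smult)
  finally show ?thesis .
qed

lemma lookup_comp: "Poly_Mapping.lookup (comp S X) m = Poly_Mapping.lookup X (S, m)"
proof -
  have "{m. Poly_Mapping.lookup X (S, m) \<noteq> 0} \<subseteq> snd ` Poly_Mapping.keys X"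
    by (force simp: in_keys_iff)
  then have "finite {m. Poly_Mapping.lookup X (S, m) \<noteq> 0}"
    by (rule finite_subset) simp
  then show ?thesis
    unfolding comp_def by (simp add: case_prod_unfold)
qed

lemma comp_push_keys_apsnd:
  "comp S (push_keys (apsnd f) X) = push_keys f (comp S (X :: 'f::comm_monoid_add bvec))"
proof (rule poly_mapping_eqI)
  fix m
  let ?K = "{b \<in> Poly_Mapping.keys X. fst b = S}"
  have keys_comp: "Poly_Mapping.keys (comp S X) = snd ` ?K"
    by (force simp: in_keys_iff lookup_comp)
  have "Poly_Mapping.lookup (comp S (push_keys (apsnd f) X)) m =
      (\<Sum>b\<in>Poly_Mapping.keys X. if apsnd f b = (S, m) then Poly_Mapping.lookup X b else 0)"
    by (simp add: lookup_comp lookup_push_keys[OF finite_keys order.refl])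
  also have "\<dots> = (\<Sum>b\<in>Poly_Mapping.keys X.
      if fst b = S then if f (snd b) = m then Poly_Mapping.lookup X b else 0 else 0)"
    by (intro sum.cong refl) (auto simp: apsnd_def map_prod_def split_def)
  also have "\<dots> = (\<Sum>b\<in>?K. if f (snd b) = m then Poly_Mapping.lookup X b else 0)"
    by (rule sum.inter_filter[OF finite_keys, symmetric])
  also have "\<dots> = (\<Sum>b\<in>?K. if f (snd b) = m then Poly_Mapping.lookup (comp S X) (snd b) else 0)"
    by (intro sum.cong refl) (auto simp: lookup_comp)
  also have "\<dots> = Poly_Mapping.lookup (push_keys f (comp S X)) m"
    unfolding lookup_push_keys[OF finite_keys order.refl] keys_comp
    by (subst sum.reindex) (auto simp: inj_on_def prod_eq_iff)
  finally show "Poly_Mapping.lookup (comp S (push_keys (apsnd f) X)) m =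
      Poly_Mapping.lookup (push_keys f (comp S X)) m" .
qed

section \<open>Weight and degree\<close>

lemma sum_lower_exps:
  assumes "Poly_Mapping.lookup e 0 = 0"
  shows "(\<Sum>k\<in>Poly_Mapping.keys e. Poly_Mapping.lookup e k * c k) =
    Poly_Mapping.lookup e 1 * c 1 +
    (\<Sum>k\<in>Poly_Mapping.keys (lower_exps e). Poly_Mapping.lookup (lower_exps e) k * c (Suc k))"
proof -
  let ?K = "Poly_Mapping.keys (lower_exps e)"
  have "Poly_Mapping.keys e \<subseteq> insert 1 (Suc ` ?K)"
  proof
    fix k assume "k \<in> Poly_Mapping.keys e"
    with assms show "k \<in> insert 1 (Suc ` ?K)"
      by (cases k) (auto simp: in_keys_iff lookup_lower_exps)
  qed
  then have "(\<Sum>k\<in>Poly_Mapping.keys e. Poly_Mapping.lookup e k * c k) =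
      (\<Sum>k\<in>insert 1 (Suc ` ?K). Poly_Mapping.lookup e k * c k)"
    by (intro sum.mono_neutral_left) (auto simp: in_keys_iff)
  also have "\<dots> = Poly_Mapping.lookup e 1 * c 1 + (\<Sum>k\<in>?K. Poly_Mapping.lookup e (Suc k) * c (Suc k))"
    by (subst sum.insert) (auto simp: sum.reindex in_keys_iff lookup_lower_exps)
  also have "(\<Sum>k\<in>?K. Poly_Mapping.lookup e (Suc k) * c (Suc k)) =
      (\<Sum>k\<in>?K. Poly_Mapping.lookup (lower_exps e) k * c (Suc k))"
    by (intro sum.cong refl) (auto simp: in_keys_iff lookup_lower_exps)
  finally show ?thesis .
qed

lemma sum_image_pred:
  assumes "0 \<notin> T"
  shows "(\<Sum>t\<in>(\<lambda>k. k - 1) ` T. c (Suc t)) = (\<Sum>t\<in>T. c t)"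
proof -
  have "Suc (t - 1) = t" if "t \<in> T" for t
    using assms that by (cases t) auto
  then show ?thesis
    by (simp add: sum.reindex[OF strict_mono_on_imp_inj_on[OF strict_mono_on_pred[OF assms]]] del: One_nat_def)
qed

lemma wt_lower_mono:
  assumes "Poly_Mapping.lookup (fst m) 0 = 0" "0 \<notin> snd m"
  shows "wt p m = p * (Poly_Mapping.lookup (fst m) 1 + wt p (lower_mono m))"
  using sum_lower_exps[OF assms(1), of "\<lambda>k. p ^ k"] sum_image_pred[OF assms(2), of "\<lambda>k. p ^ k"]
  by (simp add: wt_def lower_mono_def sum_distrib_left algebra_simps del: One_nat_def)

lemma deg_lower_mono:
  assumes "Poly_Mapping.lookup (fst m) 0 = 0" "0 \<notin> snd m" "0 < p"
  shows "deg p m = deg p (lower_mono m) + 2 * (p - 1) * (Poly_Mapping.lookup (fst m) 1 + wt p (lower_mono m))"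
proof -
  let ?l = "Poly_Mapping.lookup (fst m)" and ?l' = "Poly_Mapping.lookup (lower_exps (fst m))"
  let ?K = "Poly_Mapping.keys (lower_exps (fst m))" and ?T = "(\<lambda>k. k - 1) ` snd m"
  have zeta: "2 * (p ^ Suc k - 1) = 2 * (p ^ k - 1) + 2 * (p - 1) * p ^ k"
    and tau: "2 * p ^ Suc k - 1 = (2 * p ^ k - 1) + 2 * (p - 1) * p ^ k" for k
  proof -
    obtain x y where "p ^ Suc k = x + y" "1 \<le> x" "x = p ^ k" "y = (p - 1) * p ^ k"
      using assms(3) by (simp add: algebra_simps Suc_le_eq)
    then show "2 * (p ^ Suc k - 1) = 2 * (p ^ k - 1) + 2 * (p - 1) * p ^ k"
      and "2 * p ^ Suc k - 1 = (2 * p ^ k - 1) + 2 * (p - 1) * p ^ k"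
      by (simp_all add: mult.assoc)
  qed
  have "?l' k * (2 * (p ^ Suc k - 1)) = ?l' k * (2 * (p ^ k - 1)) + 2 * (p - 1) * (?l' k * p ^ k)" for k
    unfolding zeta distrib_left by (simp only: ac_simps)
  then have exps: "(\<Sum>k\<in>Poly_Mapping.keys (fst m). ?l k * (2 * (p ^ k - 1))) =
      (\<Sum>k\<in>?K. ?l' k * (2 * (p ^ k - 1))) + 2 * (p - 1) * (?l 1 + (\<Sum>k\<in>?K. ?l' k * p ^ k))"
    using sum_lower_exps[OF assms(1), of "\<lambda>k. 2 * (p ^ k - 1)"]
    by (simp add: sum.distrib sum_distrib_left distrib_left)
  have idx: "(\<Sum>t\<in>snd m. 2 * p ^ t - 1) = (\<Sum>t\<in>?T. 2 * p ^ t - 1) + 2 * (p - 1) * (\<Sum>t\<in>?T. p ^ t)"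
    using sum_image_pred[OF assms(2), of "\<lambda>t. 2 * p ^ t - 1"]
    by (simp only: tau sum.distrib sum_distrib_left)
  show ?thesis
    unfolding deg_def wt_def lower_mono_def fst_conv snd_conv exps idx by (simp add: algebra_simps)
qed

definition M_basis :: "nat \<Rightarrow> nat \<Rightarrow> nat \<Rightarrow> amono set" where
  "M_basis p i j = {m. valid_mono i m \<and> wt p m = p * j}"

definition N_basis :: "nat \<Rightarrow> nat \<Rightarrow> nat \<Rightarrow> amono set" where
  "N_basis p n k = {m. valid_mono n m \<and> wt p m \<le> p * k}"

lemma M_space_eq: "M_space p i j = {v. Poly_Mapping.keys v \<subseteq> M_basis p i j}"
  by (auto simp: M_space_def M_basis_def)

lemma N_space_eq: "N_space p n k = {v. Poly_Mapping.keys v \<subseteq> N_basis p n k}"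
  by (auto simp: N_space_def N_basis_def)

lemma wt_M_basis:
  assumes "m \<in> M_basis p i j" "0 < p"
  shows "j = Poly_Mapping.lookup (fst m) 1 + wt p (lower_mono m)"
  using assms wt_lower_mono[of m p] by (auto simp: M_basis_def valid_mono_def)

lemma lower_mono_in_N_basis:
  assumes "m \<in> M_basis p i j" "0 < p" "1 \<le> i"
  shows "lower_mono m \<in> N_basis p (i - 1) (j div p)"
proof -
  have valid: "valid_mono (i - 1) (lower_mono m)"
    using assms(1,3) by (auto simp: M_basis_def valid_mono_def lower_mono_def lookup_lower_exps)
  then obtain q where q: "wt p (lower_mono m) = p * q"
    using wt_lower_mono[of "lower_mono m" p] by (auto simp: valid_mono_def)
  have "p * q \<le> j"
    using wt_M_basis[OF assms(1,2)] q by simp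
  then have "q \<le> j div p"
    using assms(2) by (simp add: less_eq_div_iff_mult_less_eq mult.commute)
  with valid q show ?thesis
    by (simp add: N_basis_def)
qed

lemma raise_lower_mono:
  assumes "m \<in> M_basis p i j" "0 < p"
  shows "raise_mono p j (lower_mono m) = m"
proof -
  have "j - wt p (lower_mono m) = Poly_Mapping.lookup (fst m) 1"
    using wt_M_basis[OF assms] by simp
  moreover have "Suc ` (\<lambda>k. k - 1) ` snd m = snd m"
    using assms(1) by (force simp: M_basis_def valid_mono_def image_image)
  ultimately show ?thesis
    using assms(1)
    by (simp add: raise_mono_def lower_mono_def raise_lower_exps M_basis_def valid_mono_def del: One_nat_def)
qed

lemma lower_raise_mono: "valid_mono n m \<Longrightarrow> lower_mono (raise_mono p j m) = m"
  by (simp add: valid_mono_def raise_mono_def lower_mono_def lower_raise_exps image_image)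

lemma raise_mono_in_M_basis:
  assumes "m \<in> N_basis p (i - 1) (j div p)" "1 \<le> i"
  shows "raise_mono p j m \<in> M_basis p i j"
proof -
  have "valid_mono (i - 1) m"
    using assms(1) by (simp add: N_basis_def)
  then have lower_raise: "lower_mono (raise_mono p j m) = m"
    by (rule lower_raise_mono)
  have valid: "valid_mono i (raise_mono p j m)"
    using assms by (auto simp: N_basis_def valid_mono_def raise_mono_def lookup_raise_exps)
  have "wt p m \<le> p * (j div p)"
    using assms(1) by (simp add: N_basis_def)
  then have "wt p m \<le> j"
    using times_div_less_eq_dividend[of p j] by linarith
  then have "wt p (raise_mono p j m) = p * j"
    using wt_lower_mono[of "raise_mono p j m" p] valid lower_raise
    by (simp add: raise_mono_def lookup_raise_exps valid_mono_def)
  with valid show ?thesis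
    by (simp add: M_basis_def)
qed

lemma bij_betw_lower_mono:
  assumes "0 < p" "1 \<le> i"
  shows "bij_betw lower_mono (M_basis p i j) (N_basis p (i - 1) (j div p))"
proof (rule bij_betw_byWitness[where f' = "raise_mono p j"])
  show "\<forall>m\<in>M_basis p i j. raise_mono p j (lower_mono m) = m"
    using assms by (simp add: raise_lower_mono)
  show "\<forall>m\<in>N_basis p (i - 1) (j div p). lower_mono (raise_mono p j m) = m"
    unfolding N_basis_def using lower_raise_mono by blast
  show "lower_mono ` M_basis p i j \<subseteq> N_basis p (i - 1) (j div p)"
    by (rule image_subsetI) (rule lower_mono_in_N_basis[OF _ assms])
  show "raise_mono p j ` N_basis p (i - 1) (j div p) \<subseteq> M_basis p i j"
    by (rule image_subsetI) (rule raise_mono_in_M_basis[OF _ assms(2)])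
qed

lemma deg_push_keys_lower_mono:
  assumes "x \<in> M_space p i j" "0 < p" "homog p d x" "m \<in> Poly_Mapping.keys (push_keys lower_mono x)"
  shows "deg p m + 2 * (p - 1) * j = d"
proof -
  obtain m0 where m0: "m0 \<in> Poly_Mapping.keys x" "m = lower_mono m0"
    using keys_push_keys[of lower_mono x] assms(4) by blast
  then have M: "m0 \<in> M_basis p i j"
    using assms(1) by (auto simp: M_space_eq)
  then have "Poly_Mapping.lookup (fst m0) 0 = 0" "0 \<notin> snd m0"
    by (auto simp: M_basis_def valid_mono_def)
  from deg_lower_mono[OF this assms(2)] have "deg p m0 = deg p m + 2 * (p - 1) * j"
    using wt_M_basis[OF M assms(2)] m0(2) by simp
  then show ?thesis
    using assms(3) m0(1) by (simp add: homog_def)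
qed

lemma comp_psi_push_keys_lower_mono:
  fixes x :: "'f::comm_ring_1 avec"
  assumes "x \<in> M_space p i j"
  shows "push_keys lower_mono (comp S (psi p i x)) = comp S (psi p i (push_keys lower_mono x))"
proof -
  have "\<forall>m\<in>Poly_Mapping.keys x. finite (snd m) \<and> (\<forall>t\<in>snd m. i < t)"
    using assms by (fastforce simp: M_space_def valid_mono_def)
  then show ?thesis
    by (simp add: psi_push_keys_lower_mono comp_push_keys_apsnd)
qed

theorem mainTheorem14:
  fixes i j :: nat
  assumes "CARD('p::prime_card) \<noteq> 2"
    and "1 \<le> i"
  shows "\<exists>f :: 'p mod_ring avec \<Rightarrow> 'p mod_ring avec.
           comod_iso_shift CARD('p) i (2 * (CARD('p) - 1) * j)
             (M_space CARD('p) i j) (N_space CARD('p) (i - 1) (j div CARD('p))) f"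
proof -
  let ?p = "CARD('p)" and ?f = "push_keys lower_mono :: 'p mod_ring avec \<Rightarrow> 'p mod_ring avec"
  let ?V = "M_space ?p i j :: 'p mod_ring avec set" and ?W = "N_space ?p (i - 1) (j div ?p)"
  \<comment> \<open>The argument does not need \<open>p\<close> to be odd.\<close>
  have p: "0 < ?p"
    by simp
  have bij: "bij_betw ?f ?V ?W"
    unfolding M_space_eq N_space_eq by (intro bij_betw_push_keys bij_betw_lower_mono p assms(2))
  have deg: "\<forall>x\<in>?V. \<forall>d. homog ?p d x \<longrightarrow> (\<forall>m\<in>Poly_Mapping.keys (?f x). deg ?p m + 2 * (?p - 1) * j = d)"
    by (intro ballI allI impI; rule deg_push_keys_lower_mono[OF _ p]; assumption)
  have comm: "\<forall>x\<in>?V. \<forall>S \<subseteq> {..i}. ?f (comp S (psi ?p i x)) = comp S (psi ?p i (?f x))"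
    by (intro ballI allI impI; rule comp_psi_push_keys_lower_mono; assumption)
  have "comod_iso_shift ?p i (2 * (?p - 1) * j) ?V ?W ?f"
    unfolding comod_iso_shift_def by (intro conjI bij deg comm ballI allI push_keys_add push_keys_smult)
  then show ?thesis
    by (rule exI[of _ ?f])
qed

end
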